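(* Let $A$ be a finite set of options containing a default option $0$, and consider a finite nonempty collection of $V$ ballots as described in the context, with associated Llull matrix $v$. Let $C\subseteq A\setminus\{0\}$ be a set of clones. If some $x\in C$ is a path-revised approval choice of $v$, then every element of $C$ is a path-revised approval choice of $v$.
   Context: Each of the $V$ voters casts a ballot which, for each unordered pair $\{x,y\}$ of distinct options, expresses exactly one of: $x$ preferred to $y$; $y$ preferred to $x$; $x$ and $y$ ranked equally; no comparison. The Llull matrix is $v_{xy}=(\#\{\text{voters preferring }x\text{ to }y\}+\tfrac12\#\{\text{voters ranking }x,y\text{ equally}\})/V$ for distinct $x,y$. A set $C\subseteq A\setminus\{0\}$ is a set of clones if for every voter and every $y\in A\setminus C$ (including $y=0$), the relation expressed by that voter between $x$ and $y$ (one of the four possibilities above) is the same for all $x\in C$. Path scores: $v^*_{xy}=\max\min(v_{x_0x_1},\dots,v_{x_{m-1}x_m})$ over all paths $x_0\dots x_m$ ($m\ge1$, $x_0=x$, $x_m=y$, $x_i$ pairwise distinct). For $z\in A$ put $D(z)=v^*_{z0}-v^*_{0z}$ if $z\ne0$ and $D(0)=0$. An option $x$ is a path-revised approval choice if $D(x)\ge D(y)$ for all $y\in A\setminus\{x\}$. *)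

theory Defs
  imports Complex_Main
begin

text \<open>The relation a voter expresses between x and y (read: "x ... y").\<close>
datatype cmp = Above | Below | Equal | Incomp

definition ballot :: "'a set \<Rightarrow> ('a \<Rightarrow> 'a \<Rightarrow> cmp) \<Rightarrow> bool" where
  "ballot A b \<longleftrightarrow> (\<forall>x\<in>A. \<forall>y\<in>A. x \<noteq> y \<longrightarrow>
      (b x y = Above \<longleftrightarrow> b y x = Below) \<and>
      (b x y = Equal \<longleftrightarrow> b y x = Equal) \<and>
      (b x y = Incomp \<longleftrightarrow> b y x = Incomp))"

definition llull :: "'v set \<Rightarrow> ('v \<Rightarrow> 'a \<Rightarrow> 'a \<Rightarrow> cmp) \<Rightarrow> 'a \<Rightarrow> 'a \<Rightarrow> real" where
  "llull I B x y = (real (card {i\<in>I. B i x y = Above})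
                    + real (card {i\<in>I. B i x y = Equal}) / 2) / real (card I)"

text \<open>Clones (0 is the default option d).\<close>
definition clones :: "'a set \<Rightarrow> 'a \<Rightarrow> 'v set \<Rightarrow> ('v \<Rightarrow> 'a \<Rightarrow> 'a \<Rightarrow> cmp) \<Rightarrow> 'a set \<Rightarrow> bool" where
  "clones A d I B C \<longleftrightarrow> C \<subseteq> A - {d} \<and>
     (\<forall>i\<in>I. \<forall>y\<in>A - C. \<forall>x\<in>C. \<forall>x'\<in>C. B i x y = B i x' y)"

definition paths :: "'a set \<Rightarrow> 'a \<Rightarrow> 'a \<Rightarrow> 'a list set" where
  "paths A x y = {xs. set xs \<subseteq> A \<and> distinct xs \<and> length xs \<ge> 2 \<and>
                      hd xs = x \<and> last xs = y}"

definition path_strength :: "('a \<Rightarrow> 'a \<Rightarrow> real) \<Rightarrow> 'a list \<Rightarrow> real" where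
  "path_strength v xs = Min (set (map (\<lambda>(a, b). v a b) (zip xs (tl xs))))"

definition path_score :: "'a set \<Rightarrow> ('a \<Rightarrow> 'a \<Rightarrow> real) \<Rightarrow> 'a \<Rightarrow> 'a \<Rightarrow> real" where
  "path_score A v x y = Max (path_strength v ` paths A x y)"

definition Dscore :: "'a set \<Rightarrow> 'a \<Rightarrow> ('a \<Rightarrow> 'a \<Rightarrow> real) \<Rightarrow> 'a \<Rightarrow> real" where
  "Dscore A d v z = (if z = d then 0 else path_score A v z d - path_score A v d z)"

definition path_revised_approval_choice ::
    "'a set \<Rightarrow> 'a \<Rightarrow> ('a \<Rightarrow> 'a \<Rightarrow> real) \<Rightarrow> 'a \<Rightarrow> bool" where
  "path_revised_approval_choice A d v x \<longleftrightarrow>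
     x \<in> A \<and> (\<forall>y\<in>A - {x}. Dscore A d v x \<ge> Dscore A d v y)"

end

theory Submission
  imports Defs
begin

text \<open>Seen from an option y outside the clone set C, all clones look alike in the Llull matrix:
  v c y and v y c do not depend on c \<in> C. On a path from a clone to the default option one may
  therefore drop everything before the last clone on it and start from any other clone instead,
  without lowering the path strength; hence v* c 0 is the same for all clones c. Reversing paths
  in the transposed matrix gives the same for v* 0 c. So all clones share one D-value, and if
  one of them maximises D, all of them do.\<close>

definition path_edges :: "'a list \<Rightarrow> ('a \<times> 'a) set" where
  "path_edges xs = set (zip xs (tl xs))"

lemma path_edges_Nil [simp]: "path_edges [] = {}"
  and path_edges_singleton [simp]: "path_edges [a] = {}"
  and path_edges_Cons_Cons [simp]: "path_edges (a # b # xs) = insert (a, b) (path_edges (b # xs))"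
  by (simp_all add: path_edges_def)

lemma path_edges_append:
  "path_edges (xs @ ys) = path_edges xs \<union> path_edges ys \<union>
     (if xs \<noteq> [] \<and> ys \<noteq> [] then {(last xs, hd ys)} else {})"
  unfolding path_edges_def
proof (induction xs)
  case (Cons a xs)
  then show ?case by (cases xs; cases ys) auto
qed simp

lemma path_edges_rev: "path_edges (rev xs) = prod.swap ` path_edges xs"
proof (induction xs)
  case (Cons a xs)
  then show ?case
    by (cases xs) (auto simp: path_edges_append)
qed simp

lemma path_strength_eq_Min_edges:
  "path_strength v xs = Min ((\<lambda>(a, b). v a b) ` path_edges xs)"
  unfolding path_strength_def path_edges_def by simp

lemma path_edges_nonempty: "2 \<le> length xs \<Longrightarrow> path_edges xs \<noteq> {}"
  by (cases xs rule: remdups_adj.cases) auto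

lemma path_strength_antimono:
  assumes "(\<lambda>(a, b). v a b) ` path_edges q \<subseteq> (\<lambda>(a, b). v a b) ` path_edges p"
    and "2 \<le> length q"
  shows "path_strength v p \<le> path_strength v q"
  unfolding path_strength_eq_Min_edges
  using assms path_edges_nonempty[OF assms(2)]
  by (intro Min_antimono) (auto simp: path_edges_def)

lemma path_strength_transpose:
  "path_strength (\<lambda>a b. v b a) (rev xs) = path_strength v xs"
  by (simp add: path_strength_eq_Min_edges path_edges_rev image_image case_prod_beta)

lemma paths_rev: "paths A y x = rev ` paths A x y"
proof -
  have rev_paths: "rev xs \<in> paths A y x \<longleftrightarrow> xs \<in> paths A x y" for xs
    by (cases "xs = []") (auto simp: paths_def hd_rev last_rev)
  show ?thesis
  proof (intro set_eqI iffI)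
    fix xs assume "xs \<in> paths A y x"
    then have "rev xs \<in> paths A x y"
      using rev_paths[of "rev xs"] by simp
    then show "xs \<in> rev ` paths A x y"
      by (rule rev_image_eqI) simp
  qed (auto simp: rev_paths)
qed

lemma path_score_transpose: "path_score A (\<lambda>a b. v b a) y x = path_score A v x y"
  unfolding path_score_def paths_rev[of A y x] image_image path_strength_transpose ..

lemma finite_paths:
  assumes "finite A"
  shows "finite (paths A x y)"
proof (rule finite_subset)
  show "paths A x y \<subseteq> {xs. set xs \<subseteq> A \<and> length xs \<le> card A}"
  proof
    fix xs assume "xs \<in> paths A x y"
    then have "set xs \<subseteq> A" "distinct xs" by (auto simp: paths_def)
    then show "xs \<in> {xs. set xs \<subseteq> A \<and> length xs \<le> card A}"
      using assms by (simp add: card_mono flip: distinct_card)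
  qed
  show "finite {xs. set xs \<subseteq> A \<and> length xs \<le> card A}"
    using finite_lists_length_le[OF assms] by simp
qed

lemma path_score_le_if_dominated:
  assumes "finite A" and "paths A x y \<noteq> {}"
    and "\<And>p. p \<in> paths A x y \<Longrightarrow> \<exists>q\<in>paths A x' y'. path_strength v p \<le> path_strength v q"
  shows "path_score A v x y \<le> path_score A v x' y'"
  unfolding path_score_def
proof (rule Max.boundedI)
  fix s assume "s \<in> path_strength v ` paths A x y"
  then obtain p q where "s = path_strength v p" "q \<in> paths A x' y'"
    "path_strength v p \<le> path_strength v q"
    using assms(3) by blast
  then show "s \<le> Max (path_strength v ` paths A x' y')"
    using finite_paths[OF assms(1)] by (meson Max_ge finite_imageI image_eqI order_trans)
qed (simp_all add: assms(2) finite_paths[OF assms(1)])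

lemma path_to_outside_clone_dominated:
  assumes "C \<subseteq> A" and "y \<notin> C" and "c' \<in> C"
    and outside_eq: "\<forall>a\<in>C. \<forall>a'\<in>C. \<forall>z\<in>A - C. v a z = v a' z"
    and p: "p \<in> paths A c y" and "c \<in> C"
  shows "\<exists>q\<in>paths A c' y. path_strength v p \<le> path_strength v q"
proof -
  from p have p_props: "set p \<subseteq> A" "distinct p" "hd p = c" "last p = y" "p \<noteq> []"
    by (auto simp: paths_def)
  then have clone_in_p: "\<exists>a\<in>set p. a \<in> C"
    using \<open>c \<in> C\<close> hd_in_set by blast
  obtain pre a suf where p_split: "p = pre @ a # suf" "a \<in> C" "\<forall>z\<in>set suf. z \<notin> C"
    using split_list_last_prop[OF clone_in_p] by blast
  have "suf \<noteq> []"
    using p_split p_props(4) \<open>y \<notin> C\<close> by auto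
  \<comment> \<open>restart at c' from the last clone a on p; the new first edge weighs as much as the
    edge leaving a\<close>
  define q where "q = c' # suf"
  have q_props: "q \<in> paths A c' y"
    using p_split p_props \<open>suf \<noteq> []\<close> \<open>C \<subseteq> A\<close> \<open>c' \<in> C\<close>
    by (cases suf) (auto simp: paths_def q_def)
  have "hd suf \<in> A - C"
    using p_split p_props(1) \<open>suf \<noteq> []\<close> by auto
  then have "v c' (hd suf) = v a (hd suf)"
    using outside_eq \<open>c' \<in> C\<close> p_split(2) by blast
  moreover have "path_edges q = insert (c', hd suf) (path_edges suf)"
    using \<open>suf \<noteq> []\<close> by (cases suf) (simp_all add: q_def)
  moreover have "insert (a, hd suf) (path_edges suf) \<subseteq> path_edges p"
    using \<open>suf \<noteq> []\<close> by (cases suf) (auto simp: p_split(1) path_edges_append)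
  ultimately have "(\<lambda>(a, b). v a b) ` path_edges q \<subseteq> (\<lambda>(a, b). v a b) ` path_edges p"
    by force
  then have "path_strength v p \<le> path_strength v q"
    using \<open>suf \<noteq> []\<close> by (intro path_strength_antimono) (auto simp: q_def Suc_le_eq)
  with q_props show ?thesis by blast
qed

lemma path_score_from_clones_eq:
  assumes "finite A" and "C \<subseteq> A" and "y \<in> A - C" and "c \<in> C" and "c' \<in> C"
    and outside_eq: "\<forall>a\<in>C. \<forall>a'\<in>C. \<forall>z\<in>A - C. v a z = v a' z"
  shows "path_score A v c y = path_score A v c' y"
proof -
  have "path_score A v a y \<le> path_score A v a' y" if "a \<in> C" "a' \<in> C" for a a'
  proof (rule path_score_le_if_dominated[OF \<open>finite A\<close>])
    have "[a, y] \<in> paths A a y"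
      using that assms(2,3) by (auto simp: paths_def)
    then show "paths A a y \<noteq> {}" by blast
  qed (use path_to_outside_clone_dominated[OF assms(2) _ that(2) outside_eq] assms(3) that(1) in blast)
  then show ?thesis
    using assms(4,5) by (meson order_antisym)
qed

lemma path_score_to_clones_eq:
  assumes "finite A" and "C \<subseteq> A" and "y \<in> A - C" and "c \<in> C" and "c' \<in> C"
    and outside_eq: "\<forall>a\<in>C. \<forall>a'\<in>C. \<forall>z\<in>A - C. v z a = v z a'"
  shows "path_score A v y c = path_score A v y c'"
proof -
  have "path_score A (\<lambda>a b. v b a) c y = path_score A (\<lambda>a b. v b a) c' y"
    by (rule path_score_from_clones_eq[OF assms(1-5)]) (use outside_eq in blast)
  then show ?thesis
    unfolding path_score_transpose[of A v] .
qed

lemma Dscore_clones_eq: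
  assumes "finite A" and "C \<subseteq> A - {d}" and "d \<in> A" and "c \<in> C" and "c' \<in> C"
    and outside_eq: "\<forall>a\<in>C. \<forall>a'\<in>C. \<forall>z\<in>A - C. v a z = v a' z \<and> v z a = v z a'"
  shows "Dscore A d v c = Dscore A d v c'"
proof -
  have "C \<subseteq> A" and "d \<in> A - C" and "c \<noteq> d" and "c' \<noteq> d"
    using assms(2-5) by auto
  moreover have "path_score A v c d = path_score A v c' d"
    by (rule path_score_from_clones_eq[OF assms(1) \<open>C \<subseteq> A\<close> \<open>d \<in> A - C\<close> assms(4,5)])
      (use outside_eq in blast)
  moreover have "path_score A v d c = path_score A v d c'"
    by (rule path_score_to_clones_eq[OF assms(1) \<open>C \<subseteq> A\<close> \<open>d \<in> A - C\<close> assms(4,5)])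
      (use outside_eq in blast)
  ultimately show ?thesis
    by (simp add: Dscore_def)
qed

lemma ballot_converse_cong:
  assumes "ballot A b" and "x \<in> A" "y \<in> A" "x \<noteq> y" and "x' \<in> A" "y' \<in> A" "x' \<noteq> y'"
    and "b x y = b x' y'"
  shows "b y x = b y' x'"
  using assms unfolding ballot_def by (cases "b y x"; cases "b y' x'") metis+

lemma llull_cong:
  assumes "\<And>i. i \<in> I \<Longrightarrow> B i x y = B i x' y'"
  shows "llull I B x y = llull I B x' y'"
proof -
  have "{i\<in>I. B i x y = r} = {i\<in>I. B i x' y' = r}" for r
    using assms by auto
  then show ?thesis by (simp add: llull_def)
qed

lemma llull_clones:
  assumes ballots: "\<forall>i\<in>I. ballot A (B i)" and "clones A d I B C"
    and "c \<in> C" and "c' \<in> C" and "z \<in> A - C"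
  shows "llull I B c z = llull I B c' z \<and> llull I B z c = llull I B z c'"
proof
  have "C \<subseteq> A" and clone_cmp: "\<forall>i\<in>I. \<forall>y\<in>A - C. \<forall>x\<in>C. \<forall>x'\<in>C. B i x y = B i x' y"
    using assms(2) unfolding clones_def by blast+
  have out: "B i c z = B i c' z" if "i \<in> I" for i
    using clone_cmp that assms(3-5) by blast
  then show "llull I B c z = llull I B c' z"
    by (rule llull_cong)
  have "B i z c = B i z c'" if "i \<in> I" for i
  proof -
    have "ballot A (B i)"
      using ballots that by blast
    moreover have "c \<in> A" "c' \<in> A" "z \<in> A" "c \<noteq> z" "c' \<noteq> z"
      using \<open>C \<subseteq> A\<close> assms(3-5) by auto
    ultimately show ?thesis
      using ballot_converse_cong out[OF that] by metis
  qed
  then show "llull I B z c = llull I B z c'"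
    by (rule llull_cong)
qed

theorem theorem3p4:
  fixes A :: "'a set" and d :: 'a and I :: "'v set" and B :: "'v \<Rightarrow> 'a \<Rightarrow> 'a \<Rightarrow> cmp"
    and C :: "'a set" and x :: 'a
  assumes "finite A" and "d \<in> A"
    and "finite I" and "I \<noteq> {}"
    and "\<forall>i\<in>I. ballot A (B i)"
    and "clones A d I B C"
    and "x \<in> C"
    and "path_revised_approval_choice A d (llull I B) x"
  shows "\<forall>z\<in>C. path_revised_approval_choice A d (llull I B) z"
proof
  fix z assume "z \<in> C"
  have "C \<subseteq> A - {d}"
    using assms(6) unfolding clones_def by blast
  have "Dscore A d (llull I B) z = Dscore A d (llull I B) x"
    using Dscore_clones_eq[OF assms(1) \<open>C \<subseteq> A - {d}\<close> assms(2) \<open>z \<in> C\<close> assms(7)]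
      llull_clones[OF assms(5,6)] by blast
  with assms(8) show "path_revised_approval_choice A d (llull I B) z"
    using \<open>z \<in> C\<close> \<open>C \<subseteq> A - {d}\<close> by (auto simp: path_revised_approval_choice_def)
qed

end
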